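(* Let $G$ be a connected graph whose set $V_1$ of degree-one vertices is nonempty, say $V_1=\{v_1,\dots,v_i\}$. Let $G\oplus V_1'$ be the graph with vertex set $V(G)\cup\{v_1',\dots,v_i'\}$ (where $v_1',\dots,v_i'$ are new vertices) and edge set $E(G)\cup\{v_1v_1',\dots,v_iv_i'\}$. If $G$ is strongly antimagic, then $G\oplus V_1'$ is strongly antimagic.
   Context: All graphs are finite and simple. For a graph $G=(V,E)$ and a bijection $f:E\to\{1,2,\dots,|E|\}$, the vertex sum at $u$ is $\varphi_f(u)=\sum_{e\in E(u)}f(e)$, where $E(u)$ is the set of edges incident to $u$. The labeling $f$ is antimagic if $\varphi_f(u)\neq\varphi_f(v)$ for all distinct $u,v\in V$; it is strongly antimagic if it is antimagic and moreover $\deg(u)<\deg(v)$ implies $\varphi_f(u)<\varphi_f(v)$. A graph is strongly antimagic if it admits a strongly antimagic labeling. $V_k$ denotes the set of vertices of degree $k$. *)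

theory Defs
  imports Main
begin

definition simple_graph :: "'a set \<Rightarrow> 'a set set \<Rightarrow> bool" where
  "simple_graph V E \<longleftrightarrow> finite V \<and> (\<forall>e\<in>E. e \<subseteq> V \<and> card e = 2)"

definition incident_edges :: "'a set set \<Rightarrow> 'a \<Rightarrow> 'a set set" where
  "incident_edges E u = {e \<in> E. u \<in> e}"

definition degree :: "'a set set \<Rightarrow> 'a \<Rightarrow> nat" where
  "degree E u = card (incident_edges E u)"

definition deg_vertices :: "'a set \<Rightarrow> 'a set set \<Rightarrow> nat \<Rightarrow> 'a set" where
  "deg_vertices V E k = {u \<in> V. degree E u = k}"

inductive reachable :: "'a set set \<Rightarrow> 'a \<Rightarrow> 'a \<Rightarrow> bool" for E where
  refl: "reachable E u u"
| step: "reachable E u v \<Longrightarrow> {v, w} \<in> E \<Longrightarrow> reachable E u w"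

definition connected_graph :: "'a set \<Rightarrow> 'a set set \<Rightarrow> bool" where
  "connected_graph V E \<longleftrightarrow> V \<noteq> {} \<and> (\<forall>u\<in>V. \<forall>v\<in>V. reachable E u v)"

definition vertex_sum :: "'a set set \<Rightarrow> ('a set \<Rightarrow> nat) \<Rightarrow> 'a \<Rightarrow> nat" where
  "vertex_sum E f u = (\<Sum>e\<in>incident_edges E u. f e)"

definition antimagic_labeling :: "'a set \<Rightarrow> 'a set set \<Rightarrow> ('a set \<Rightarrow> nat) \<Rightarrow> bool" where
  "antimagic_labeling V E f \<longleftrightarrow> bij_betw f E {1..card E} \<and>
     (\<forall>u\<in>V. \<forall>v\<in>V. u \<noteq> v \<longrightarrow> vertex_sum E f u \<noteq> vertex_sum E f v)"

definition strongly_antimagic_labeling :: "'a set \<Rightarrow> 'a set set \<Rightarrow> ('a set \<Rightarrow> nat) \<Rightarrow> bool" where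
  "strongly_antimagic_labeling V E f \<longleftrightarrow> antimagic_labeling V E f \<and>
     (\<forall>u\<in>V. \<forall>v\<in>V. degree E u < degree E v \<longrightarrow> vertex_sum E f u < vertex_sum E f v)"

definition strongly_antimagic :: "'a set \<Rightarrow> 'a set set \<Rightarrow> bool" where
  "strongly_antimagic V E \<longleftrightarrow> (\<exists>f. strongly_antimagic_labeling V E f)"

end

theory Submission
  imports Defs
begin

(* Let f be strongly antimagic on G and i = |V_1|. Label each old edge e by f e + i and the
   pendant edge v v' by the rank of \<phi>_f(v) among the leaves, a number in 1..i. An old vertex u
   of degree d then has sum \<phi>_f(u) + d i, plus its rank if u is a leaf (whose degree becomes 2),
   and a new vertex v' has the rank of v as its sum. As a rank never exceeds i, the old vertices
   remain ordered lexicographically by (degree in G, \<phi>_f); the new vertices, the only ones of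
   degree 1, have sums in 1..i, above the isolated vertices (sum 0) and below all others (sum > i). *)

definition rank_in :: "'a set \<Rightarrow> ('a \<Rightarrow> 'b::linorder) \<Rightarrow> 'a \<Rightarrow> nat" where
  "rank_in A p x = card {y \<in> A. p y \<le> p x}"

lemma rank_in_less:
  assumes "finite A" "y \<in> A" "p x < p y"
  shows "rank_in A p x < rank_in A p y"
proof -
  have "{z \<in> A. p z \<le> p x} \<subset> {z \<in> A. p z \<le> p y}"
    using assms(2,3) by force
  then show ?thesis
    unfolding rank_in_def by (rule psubset_card_mono[rotated]) (use assms(1) in auto)
qed

lemma rank_in_pos: "finite A \<Longrightarrow> x \<in> A \<Longrightarrow> 0 < rank_in A p x"
  unfolding rank_in_def by (subst card_gt_0_iff) auto

lemma rank_in_le_card: "finite A \<Longrightarrow> rank_in A p x \<le> card A"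
  unfolding rank_in_def by (rule card_mono) auto

lemma bij_betw_rank_in:
  assumes "finite A" "inj_on p A"
  shows "bij_betw (rank_in A p) A {1..card A}"
proof -
  have inj: "inj_on (rank_in A p) A"
  proof (rule inj_onI)
    fix x y assume "x \<in> A" "y \<in> A" "rank_in A p x = rank_in A p y"
    then show "x = y"
      using rank_in_less[OF assms(1), of x p y] rank_in_less[OF assms(1), of y p x]
        inj_onD[OF assms(2)] by (metis less_irrefl linorder_neqE)
  qed
  have "rank_in A p ` A \<subseteq> {1..card A}"
    using rank_in_pos[OF assms(1)] rank_in_le_card[OF assms(1)] by (auto simp: Suc_le_eq)
  moreover have "card (rank_in A p ` A) = card {1..card A}"
    using card_image[OF inj] by simp
  ultimately have "rank_in A p ` A = {1..card A}"
    by (simp add: card_subset_eq)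
  with inj show ?thesis
    by (simp add: bij_betw_def)
qed

lemma simple_graph_finite_edges: "simple_graph V E \<Longrightarrow> finite E"
  unfolding simple_graph_def by (metis PowI finite_Pow_iff rev_finite_subset subsetI)

lemma vertex_sum_shift:
  assumes "finite E" "\<And>e. e \<in> E \<Longrightarrow> g e = f e + c"
  shows "vertex_sum E g u = vertex_sum E f u + degree E u * c"
proof -
  have "vertex_sum E g u = (\<Sum>e\<in>incident_edges E u. f e + c)"
    unfolding vertex_sum_def by (rule sum.cong) (auto simp: assms(2) incident_edges_def)
  then show ?thesis
    by (simp add: sum.distrib vertex_sum_def degree_def)
qed

lemma vertex_sum_pos_iff:
  assumes "finite E" "\<And>e. e \<in> E \<Longrightarrow> 0 < f e"
  shows "0 < vertex_sum E f u \<longleftrightarrow> 0 < degree E u"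
proof -
  have "finite (incident_edges E u)"
    using assms(1) by (simp add: incident_edges_def)
  moreover have "\<And>e. e \<in> incident_edges E u \<Longrightarrow> 0 < f e"
    using assms(2) by (simp add: incident_edges_def)
  ultimately show ?thesis
    unfolding vertex_sum_def degree_def
    by (metis card_gt_0_iff less_irrefl sum.empty sum_pos)
qed

lemma strongly_antimagic_labelingI:
  assumes "bij_betw f E {1..card E}"
    and "\<And>u v. u \<in> V \<Longrightarrow> v \<in> V \<Longrightarrow> degree E u < degree E v \<Longrightarrow>
           vertex_sum E f u < vertex_sum E f v"
    and "\<And>u v. u \<in> V \<Longrightarrow> v \<in> V \<Longrightarrow> u \<noteq> v \<Longrightarrow> degree E u = degree E v \<Longrightarrow>
           vertex_sum E f u \<noteq> vertex_sum E f v"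
  shows "strongly_antimagic_labeling V E f"
  unfolding strongly_antimagic_labeling_def antimagic_labeling_def
  using assms by (metis less_irrefl linorder_neqE)

locale pendant_extension =
  fixes V :: "'a set" and E :: "'a set set" and L :: "'a set" and new :: "'a \<Rightarrow> 'a"
  assumes simple: "simple_graph V E"
    and L_subset: "L \<subseteq> V"
    and inj_new: "inj_on new L"
    and new_fresh: "new ` L \<inter> V = {}"
begin

abbreviation pendant :: "'a \<Rightarrow> 'a set" where
  "pendant v \<equiv> {v, new v}"

abbreviation ext_vertices :: "'a set" where
  "ext_vertices \<equiv> V \<union> new ` L"

abbreviation ext_edges :: "'a set set" where
  "ext_edges \<equiv> E \<union> pendant ` L"

lemma finite_E: "finite E"
  using simple by (rule simple_graph_finite_edges)

lemma finite_L: "finite L"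
  using simple L_subset unfolding simple_graph_def by (blast intro: finite_subset)

lemma edge_subset: "e \<in> E \<Longrightarrow> e \<subseteq> V"
  using simple unfolding simple_graph_def by blast

lemma new_notin_V: "v \<in> L \<Longrightarrow> new v \<notin> V"
  using new_fresh by blast

lemma pendant_notin_E: "v \<in> L \<Longrightarrow> pendant v \<notin> E"
  using edge_subset new_notin_V by blast

lemma inj_on_pendant: "inj_on pendant L"
  using L_subset new_notin_V by (intro inj_onI) blast

lemma card_ext_edges: "card ext_edges = card E + card L"
proof -
  have "E \<inter> pendant ` L = {}"
    using pendant_notin_E by blast
  then show ?thesis
    using card_Un_disjoint[OF finite_E finite_imageI[OF finite_L]] card_image[OF inj_on_pendant]
    by simp
qed

lemma incident_edges_ext_old:
  assumes "u \<in> V"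
  shows "incident_edges ext_edges u = incident_edges E u \<union> (if u \<in> L then {pendant u} else {})"
  using assms new_notin_V unfolding incident_edges_def by auto

lemma incident_edges_ext_new:
  assumes "v \<in> L"
  shows "incident_edges ext_edges (new v) = {pendant v}"
proof -
  have "new v \<notin> e" if "e \<in> E" for e
    using that assms edge_subset new_notin_V by blast
  moreover have "new v \<in> pendant w \<longleftrightarrow> w = v" if "w \<in> L" for w
    using that assms L_subset new_notin_V inj_onD[OF inj_new] by auto
  ultimately show ?thesis
    using assms new_notin_V[OF assms] L_subset unfolding incident_edges_def by auto
qed

lemma degree_ext_old:
  assumes "u \<in> V"
  shows "degree ext_edges u = degree E u + (if u \<in> L then 1 else 0)"
proof -
  have "finite (incident_edges E u)"
    using finite_E by (simp add: incident_edges_def)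
  moreover have "pendant u \<notin> incident_edges E u" if "u \<in> L"
    using that pendant_notin_E by (simp add: incident_edges_def)
  ultimately show ?thesis
    using incident_edges_ext_old[OF assms] by (simp add: degree_def)
qed

lemma vertex_sum_ext_old:
  assumes "u \<in> V"
  shows "vertex_sum ext_edges g u = vertex_sum E g u + (if u \<in> L then g (pendant u) else 0)"
proof -
  have "finite (incident_edges E u)"
    using finite_E by (simp add: incident_edges_def)
  moreover have "pendant u \<notin> incident_edges E u" if "u \<in> L"
    using that pendant_notin_E by (simp add: incident_edges_def)
  ultimately show ?thesis
    using incident_edges_ext_old[OF assms] by (simp add: vertex_sum_def)
qed

lemma degree_ext_new: "v \<in> L \<Longrightarrow> degree ext_edges (new v) = 1"
  by (simp add: degree_def incident_edges_ext_new)

lemma vertex_sum_ext_new: "v \<in> L \<Longrightarrow> vertex_sum ext_edges g (new v) = g (pendant v)"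
  by (simp add: vertex_sum_def incident_edges_ext_new)

definition extended_labeling :: "('a set \<Rightarrow> nat) \<Rightarrow> ('a \<Rightarrow> nat) \<Rightarrow> 'a set \<Rightarrow> nat" where
  "extended_labeling f r e = (if e \<in> E then f e + card L else r (inv_into L pendant e))"

lemma extended_labeling_pendant: "v \<in> L \<Longrightarrow> extended_labeling f r (pendant v) = r v"
  using pendant_notin_E inv_into_f_f[OF inj_on_pendant] by (simp add: extended_labeling_def)

lemma bij_betw_extended_labeling:
  assumes f: "bij_betw f E {1..card E}" and r: "bij_betw r L {1..card L}"
  shows "bij_betw (extended_labeling f r) ext_edges {1..card ext_edges}"
proof -
  have "bij_betw (\<lambda>n. n + card L) {1..card E} {card L + 1..card L + card E}"
    by (simp add: bij_betw_def image_add_atLeastAtMost' add.commute)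
  then have "bij_betw (\<lambda>e. f e + card L) E {card L + 1..card L + card E}"
    using bij_betw_trans[OF f] by (simp add: comp_def)
  then have old: "bij_betw (extended_labeling f r) E {card L + 1..card L + card E}"
    by (rule bij_betw_cong[THEN iffD1, rotated])
      (auto simp: extended_labeling_def image_add_atLeastAtMost')
  have "bij_betw (r \<circ> inv_into L pendant) (pendant ` L) {1..card L}"
    using bij_betw_trans[OF bij_betw_inv_into[OF inj_on_imp_bij_betw[OF inj_on_pendant]] r] .
  then have pend: "bij_betw (extended_labeling f r) (pendant ` L) {1..card L}"
    by (rule bij_betw_cong[THEN iffD1, rotated])
      (auto simp: extended_labeling_def pendant_notin_E)
  have "bij_betw (extended_labeling f r) ext_edges ({card L + 1..card L + card E} \<union> {1..card L})"
    by (rule bij_betw_combine[OF old pend]) auto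
  moreover have "{card L + 1..card L + card E} \<union> {1..card L} = {1..card ext_edges}"
    using card_ext_edges by auto
  ultimately show ?thesis
    by simp
qed

lemma vertex_sum_extended_labeling_old:
  assumes "u \<in> V"
  shows "vertex_sum ext_edges (extended_labeling f r) u =
    vertex_sum E f u + degree E u * card L + (if u \<in> L then r u else 0)"
  using vertex_sum_ext_old[OF assms] extended_labeling_pendant
    vertex_sum_shift[OF finite_E, of "extended_labeling f r" f "card L"]
  by (simp add: extended_labeling_def)

end

locale leaf_extension = pendant_extension +
  fixes f :: "'a set \<Rightarrow> nat"
  assumes L_eq: "L = deg_vertices V E 1"
    and labeling: "strongly_antimagic_labeling V E f"
begin

abbreviation \<phi> :: "'a \<Rightarrow> nat" where
  "\<phi> \<equiv> vertex_sum E f"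

abbreviation leaf_rank :: "'a \<Rightarrow> nat" where
  "leaf_rank \<equiv> rank_in L \<phi>"

abbreviation f' :: "'a set \<Rightarrow> nat" where
  "f' \<equiv> extended_labeling f leaf_rank"

abbreviation \<phi>' :: "'a \<Rightarrow> nat" where
  "\<phi>' \<equiv> vertex_sum ext_edges f'"

abbreviation deg' :: "'a \<Rightarrow> nat" where
  "deg' \<equiv> degree ext_edges"

lemma bij_f: "bij_betw f E {1..card E}"
  and \<phi>_inj: "\<And>u v. u \<in> V \<Longrightarrow> v \<in> V \<Longrightarrow> u \<noteq> v \<Longrightarrow> \<phi> u \<noteq> \<phi> v"
  and \<phi>_degree_mono: "\<And>u v. u \<in> V \<Longrightarrow> v \<in> V \<Longrightarrow> degree E u < degree E v \<Longrightarrow> \<phi> u < \<phi> v"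
  using labeling unfolding strongly_antimagic_labeling_def antimagic_labeling_def by blast+

lemma f_pos: "e \<in> E \<Longrightarrow> 0 < f e"
  using bij_betw_apply[OF bij_f] by fastforce

lemma mem_L_iff: "u \<in> V \<Longrightarrow> u \<in> L \<longleftrightarrow> degree E u = 1"
  by (simp add: L_eq deg_vertices_def)

lemma bij_betw_leaf_rank: "bij_betw leaf_rank L {1..card L}"
  using finite_L L_subset \<phi>_inj by (intro bij_betw_rank_in inj_onI) blast+

lemma degree_ext_old_leaf: "u \<in> V \<Longrightarrow> deg' u = (if degree E u = 1 then 2 else degree E u)"
  by (simp add: degree_ext_old mem_L_iff)

lemma vertex_sum_ext_old_less:
  assumes u: "u \<in> V" and w: "w \<in> V"
    and less: "degree E u < degree E w \<or> degree E u = degree E w \<and> \<phi> u < \<phi> w"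
  shows "\<phi>' u < \<phi>' w"
proof -
  define \<epsilon> where "\<epsilon> v = (if v \<in> L then leaf_rank v else 0)" for v
  have \<epsilon>_le: "\<epsilon> v \<le> card L" for v
    using rank_in_le_card[OF finite_L, of \<phi>] by (simp add: \<epsilon>_def)
  have \<phi>': "\<phi>' v = \<phi> v + degree E v * card L + \<epsilon> v" if "v \<in> V" for v
    using vertex_sum_extended_labeling_old[OF that, of f leaf_rank] by (simp add: \<epsilon>_def)
  from less show ?thesis
  proof (elim disjE conjE)
    assume deg: "degree E u < degree E w"
    have "degree E u * card L + \<epsilon> u \<le> degree E w * card L"
      using \<epsilon>_le[of u] mult_le_mono1[of "Suc (degree E u)" "degree E w" "card L"] deg by simp
    then show ?thesis
      using \<phi>'[OF u] \<phi>'[OF w] \<phi>_degree_mono[OF u w deg] by linarith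
  next
    assume deg: "degree E u = degree E w" and "\<phi> u < \<phi> w"
    then have "\<epsilon> u \<le> \<epsilon> w"
      using mem_L_iff[OF u] mem_L_iff[OF w] rank_in_less[OF finite_L, of w \<phi> u]
      by (auto simp: \<epsilon>_def)
    then show ?thesis
      using \<phi>'[OF u] \<phi>'[OF w] deg \<open>\<phi> u < \<phi> w\<close> by simp
  qed
qed

lemma old_vertex_cases:
  assumes u: "u \<in> V"
  shows "deg' u = 0 \<and> \<phi>' u = 0 \<or> 2 \<le> deg' u \<and> card L < \<phi>' u"
proof (cases "degree E u = 0")
  case True
  then have "\<phi> u = 0"
    using vertex_sum_pos_iff[of E f u, OF finite_E f_pos] by simp
  then show ?thesis
    using True u mem_L_iff[OF u] by (simp add: degree_ext_old_leaf vertex_sum_extended_labeling_old)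
next
  case False
  then have "0 < \<phi> u"
    using vertex_sum_pos_iff[of E f u, OF finite_E f_pos] by simp
  moreover have "card L \<le> degree E u * card L"
    using False by simp
  ultimately have "card L < \<phi>' u"
    using vertex_sum_extended_labeling_old[OF u, of f leaf_rank] by linarith
  moreover have "2 \<le> deg' u"
    using False u by (simp add: degree_ext_old_leaf)
  ultimately show ?thesis
    by simp
qed

lemma new_vertex:
  assumes "v \<in> L"
  shows "deg' (new v) = 1" and "0 < \<phi>' (new v)" and "\<phi>' (new v) \<le> card L"
  using assms degree_ext_new vertex_sum_ext_new extended_labeling_pendant
    rank_in_pos[OF finite_L] rank_in_le_card[OF finite_L] by simp_all

lemma strongly_antimagic_labeling_ext: "strongly_antimagic_labeling ext_vertices ext_edges f'"
proof (rule strongly_antimagic_labelingI)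
  show "bij_betw f' ext_edges {1..card ext_edges}"
    using bij_f bij_betw_leaf_rank by (rule bij_betw_extended_labeling)
next
  fix x y assume x: "x \<in> ext_vertices" and y: "y \<in> ext_vertices" and deg: "deg' x < deg' y"
  show "\<phi>' x < \<phi>' y"
  proof (cases "x \<in> V"; cases "y \<in> V")
    assume "x \<in> V" "y \<in> V"
    moreover from this have "degree E x < degree E y"
      using deg by (simp add: degree_ext_old_leaf split: if_splits)
    ultimately show ?thesis
      by (simp add: vertex_sum_ext_old_less)
  next
    assume "x \<in> V" "y \<notin> V"
    then obtain w where w: "w \<in> L" "y = new w"
      using y by blast
    then have "deg' x = 0"
      using deg new_vertex(1) by simp
    then show ?thesis
      using old_vertex_cases[OF \<open>x \<in> V\<close>] new_vertex(2)[OF w(1)] w(2) by simp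
  next
    assume "x \<notin> V" "y \<in> V"
    then obtain v where v: "v \<in> L" "x = new v"
      using x by blast
    then have "deg' y \<noteq> 0"
      using deg by simp
    then show ?thesis
      using old_vertex_cases[OF \<open>y \<in> V\<close>] new_vertex(3)[OF v(1)] v(2) by simp
  next
    assume "x \<notin> V" "y \<notin> V"
    then show ?thesis
      using x y deg new_vertex(1) by auto
  qed
next
  fix x y assume x: "x \<in> ext_vertices" and y: "y \<in> ext_vertices"
    and "x \<noteq> y" and deg: "deg' x = deg' y"
  have old_degree_ne_1: "deg' u \<noteq> 1" if "u \<in> V" for u
    using old_vertex_cases[OF that] by auto
  show "\<phi>' x \<noteq> \<phi>' y"
  proof (cases "x \<in> V"; cases "y \<in> V")
    assume "x \<in> V" "y \<in> V"
    then have "\<phi> x \<noteq> \<phi> y"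
      using \<open>x \<noteq> y\<close> \<phi>_inj by blast
    then have "\<phi>' x < \<phi>' y \<or> \<phi>' y < \<phi>' x"
      using vertex_sum_ext_old_less[OF \<open>x \<in> V\<close> \<open>y \<in> V\<close>]
        vertex_sum_ext_old_less[OF \<open>y \<in> V\<close> \<open>x \<in> V\<close>] by linarith
    then show ?thesis
      by auto
  next
    assume "x \<in> V" "y \<notin> V"
    then show ?thesis
      using y deg old_degree_ne_1[OF \<open>x \<in> V\<close>] new_vertex(1) by force
  next
    assume "x \<notin> V" "y \<in> V"
    then show ?thesis
      using x deg old_degree_ne_1[OF \<open>y \<in> V\<close>] new_vertex(1) by force
  next
    assume "x \<notin> V" "y \<notin> V"
    then obtain v w where "v \<in> L" "w \<in> L" "x = new v" "y = new w"
      using x y by blast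
    then show ?thesis
      using \<open>x \<noteq> y\<close> bij_betw_leaf_rank vertex_sum_ext_new extended_labeling_pendant
      by (auto simp: bij_betw_def inj_on_def)
  qed
qed

end

theorem lemma1:
  fixes V :: "'a set" and E :: "'a set set" and new :: "'a \<Rightarrow> 'a"
  assumes "simple_graph V E"
    and "connected_graph V E"
    and "deg_vertices V E 1 \<noteq> {}"
    and "inj_on new (deg_vertices V E 1)"
    and "new ` deg_vertices V E 1 \<inter> V = {}"
    and "strongly_antimagic V E"
  shows "strongly_antimagic (V \<union> new ` deg_vertices V E 1)
           (E \<union> (\<lambda>v. {v, new v}) ` deg_vertices V E 1)"
proof -
  obtain f where f: "strongly_antimagic_labeling V E f"
    using assms(6) unfolding strongly_antimagic_def by blast
  interpret leaf_extension V E "deg_vertices V E 1" new f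
    using assms(1,4,5) f by unfold_locales (auto simp: deg_vertices_def)
  show ?thesis
    using strongly_antimagic_labeling_ext unfolding strongly_antimagic_def by blast
qed

end
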